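(* For every $(A,B,v)\in\mathrm{SU}(2)\times\mathbb{R}$, $$d_1(\mathrm{Id},(A,B,v))=d_2(\mathrm{Id},(Ae^{iv/2},Be^{-iv/2},v)).$$
   Context: $\mathrm{SU}(2)\times\mathbb{R}$ is the group of matrices $(A,B,v)=\begin{pmatrix}A&B&0\\-\overline{B}&\overline{A}&0\\0&0&e^v\end{pmatrix}$, $A,B\in\mathbb{C}$, $|A|^2+|B|^2=1$, $v\in\mathbb{R}$, with identity $\mathrm{Id}$. Let $E_1=\tfrac12(e_{12}-e_{21})$, $E_2=\tfrac{i}{2}(e_{12}+e_{21})$, $E_3=\tfrac{i}{2}(e_{11}-e_{22})$, $E_4=e_{33}$ ($e_{jk}$ the $3\times3$ matrix units). $d_1$ (resp. $d_2$) is the left-invariant sub-Riemannian metric defined by the left-invariant distribution whose value at $\mathrm{Id}$ is $\mathrm{span}(E_1,E_4-E_3,E_2)$ (resp. $\mathrm{span}(E_1,E_4,E_2)$), with the inner product for which these three vectors are orthonormal; the distance is the infimum of lengths of horizontal curves. *)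

theory Defs
  imports "HOL-Analysis.Analysis" "HOL-Library.Numeral_Type"
begin

text \<open>3x3 complex matrices. Indices of type 3 are written 1, 2, 3 (note 3 = 0 in type 3,
  but 1, 2, 3 are three distinct indices).\<close>

type_synonym cmat3 = "complex^3^3"

definition munit :: "3 \<Rightarrow> 3 \<Rightarrow> cmat3" where
  "munit j k = (\<chi> a b. if a = j \<and> b = k then 1 else 0)"

definition csmult :: "complex \<Rightarrow> cmat3 \<Rightarrow> cmat3" where
  "csmult c M = (\<chi> a b. c * M $ a $ b)"

definition grp :: "complex \<Rightarrow> complex \<Rightarrow> real \<Rightarrow> cmat3" where
  "grp A B v = csmult A (munit 1 1) + csmult B (munit 1 2) - csmult (cnj B) (munit 2 1)
              + csmult (cnj A) (munit 2 2) + csmult (of_real (exp v)) (munit 3 3)"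

definition E1 :: cmat3 where "E1 = csmult (1/2) (munit 1 2 - munit 2 1)"
definition E2 :: cmat3 where "E2 = csmult (\<i>/2) (munit 1 2 + munit 2 1)"
definition E3 :: cmat3 where "E3 = csmult (\<i>/2) (munit 1 1 - munit 2 2)"
definition E4 :: cmat3 where "E4 = munit 3 3"

definition Idm :: cmat3 where "Idm = mat 1"

text \<open>Horizontal curve for the left-invariant distribution spanned (at Id) by X1, X2, X3,
  parametrised on [0,1]: gamma is absolutely continuous with
  gamma' = gamma (u1 X1 + u2 X2 + u3 X3) a.e., controls u_i in L^1, i.e.
  gamma t - gamma 0 = integral_0^t gamma(s) (sum u_i(s) X_i) ds.\<close>
definition horizontal ::
  "cmat3 \<Rightarrow> cmat3 \<Rightarrow> cmat3 \<Rightarrow> (real \<Rightarrow> cmat3) \<Rightarrow> (real \<Rightarrow> real) \<Rightarrow> (real \<Rightarrow> real) \<Rightarrow> (real \<Rightarrow> real) \<Rightarrow> bool" where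
  "horizontal X1 X2 X3 \<gamma> u1 u2 u3 \<longleftrightarrow>
     u1 absolutely_integrable_on {0..1} \<and> u2 absolutely_integrable_on {0..1} \<and>
     u3 absolutely_integrable_on {0..1} \<and>
     (\<forall>t\<in>{0..1}. ((\<lambda>s. \<gamma> s ** (csmult (of_real (u1 s)) X1 + csmult (of_real (u2 s)) X2
                                  + csmult (of_real (u3 s)) X3)) has_integral (\<gamma> t - \<gamma> 0)) {0..t})"

text \<open>Sub-Riemannian length: X1, X2, X3 orthonormal.\<close>
definition sr_length :: "(real \<Rightarrow> real) \<Rightarrow> (real \<Rightarrow> real) \<Rightarrow> (real \<Rightarrow> real) \<Rightarrow> real" where
  "sr_length u1 u2 u3 = integral {0..1} (\<lambda>t. sqrt ((u1 t)\<^sup>2 + (u2 t)\<^sup>2 + (u3 t)\<^sup>2))"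

definition sr_dist :: "cmat3 \<Rightarrow> cmat3 \<Rightarrow> cmat3 \<Rightarrow> cmat3 \<Rightarrow> cmat3 \<Rightarrow> real" where
  "sr_dist X1 X2 X3 p q = Inf {sr_length u1 u2 u3 | \<gamma> u1 u2 u3.
       horizontal X1 X2 X3 \<gamma> u1 u2 u3 \<and> \<gamma> 0 = p \<and> \<gamma> 1 = q}"

definition d1 :: "cmat3 \<Rightarrow> cmat3 \<Rightarrow> real" where "d1 = sr_dist E1 (E4 - E3) E2"
definition d2 :: "cmat3 \<Rightarrow> cmat3 \<Rightarrow> real" where "d2 = sr_dist E1 E4 E2"

end

theory Submission
  imports Defs
begin

text \<open>
  Let X_a = E4 - a E3, so that d1 and d2 are the distances for the frames (E1, X_1, E2) and
  (E1, X_0, E2). Conjugation by exp(t E3) fixes E3 and E4 and rotates the (E1, E2)-plane by the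
  angle t. Hence if g is horizontal for (E1, X_a, E2) with controls (u1, u2, u3) and
  w(s) = integral of u2 over [0, s], then g(s) exp(c w(s) E3) is horizontal for (E1, X_(a-c), E2):
  differentiating the rotation factor contributes c u2 E3, which shifts the tilt, and (u1, u3) is
  rotated by the angle c w, which preserves the length. The e^v-entry of g is e^w, so a curve from
  Id to (A, B, v) has w(1) = v and the rotated curve ends at (A e^(icv/2), B e^(-icv/2), v).
  With c = 1 and c = -1 the two distances become infima over the same set of lengths.
\<close>

section \<open>Products of primitives\<close>

lemma sigma_finite_lebesgue: "sigma_finite_measure (lebesgue :: real measure)"
proof
  show "\<exists>A. countable A \<and> A \<subseteq> sets (lebesgue::real measure) \<and> \<Union> A = space lebesgue
          \<and> (\<forall>a\<in>A. emeasure lebesgue a \<noteq> \<infinity>)"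
  proof (intro exI conjI)
    show "\<Union> (range (\<lambda>n::nat. {- real n..real n})) = space lebesgue"
      by (auto simp: real_arch_simple) (metis abs_le_D1 abs_le_D2 minus_le_iff real_arch_simple)
  qed auto
qed

lemma lebesgue_integral_indicator_eq_integral:
  fixes f :: "real \<Rightarrow> real"
  assumes "set_integrable lebesgue S f"
  shows "(\<integral>x. indicator S x * f x \<partial>lebesgue) = integral S f"
  using set_lebesgue_integral_eq_integral(2)[OF assms] by (simp add: set_lebesgue_integral_def)

text \<open>Fubini on the two triangles \<open>r \<le> s\<close> and \<open>s < r\<close>.\<close>

lemma integral_product_split_diagonal:
  fixes F G :: "real \<Rightarrow> real"
  assumes F: "integrable lebesgue F" and G: "integrable lebesgue G"
  defines "Fl \<equiv> \<lambda>r. \<integral>s. indicator {..<r} s * F s \<partial>lebesgue"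
    and "Gl \<equiv> \<lambda>s. \<integral>r. indicator {..s} r * G r \<partial>lebesgue"
  shows "integrable lebesgue (\<lambda>s. F s * Gl s)" and "integrable lebesgue (\<lambda>r. G r * Fl r)"
    and "(\<integral>s. F s \<partial>lebesgue) * (\<integral>r. G r \<partial>lebesgue)
           = (\<integral>s. F s * Gl s \<partial>lebesgue) + (\<integral>r. G r * Fl r \<partial>lebesgue)"
proof -
  interpret pair_sigma_finite "lebesgue :: real measure" "lebesgue :: real measure"
    by (rule pair_sigma_finite.intro; fact sigma_finite_lebesgue)
  have ident_meas [measurable]: "(\<lambda>x::real. x) \<in> borel_measurable lebesgue"
    by (rule measurable_completion) simp
  have F_meas [measurable]: "F \<in> borel_measurable lebesgue"
    and G_meas [measurable]: "G \<in> borel_measurable lebesgue"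
    using F G by auto
  define K where "K s r = F s * G r" for s r
  define P where "P s r = F s * (indicator {..s} r * G r)" for s r
  define Q where "Q s r = G r * (indicator {..<r} s * F s)" for s r
  have K_split: "K s r = P s r + Q s r" for s r
    by (auto simp: K_def P_def Q_def indicator_def algebra_simps)
  have [measurable]: "(\<lambda>(s, r). K s r) \<in> borel_measurable (lebesgue \<Otimes>\<^sub>M lebesgue)"
    "(\<lambda>(s, r). P s r) \<in> borel_measurable (lebesgue \<Otimes>\<^sub>M lebesgue)"
    "(\<lambda>(s, r). Q s r) \<in> borel_measurable (lebesgue \<Otimes>\<^sub>M lebesgue)"
    unfolding K_def P_def Q_def indicator_def atMost_iff lessThan_iff by measurable
  have iK: "integrable (lebesgue \<Otimes>\<^sub>M lebesgue) (\<lambda>(s, r). K s r)"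
    by (rule Fubini_integrable) (use F G in \<open>auto simp: K_def abs_mult\<close>)
  have iP: "integrable (lebesgue \<Otimes>\<^sub>M lebesgue) (\<lambda>(s, r). P s r)"
    by (rule Bochner_Integration.integrable_bound[OF iK]) (auto simp: P_def K_def abs_mult indicator_def)
  have iQ: "integrable (lebesgue \<Otimes>\<^sub>M lebesgue) (\<lambda>(s, r). Q s r)"
    by (rule Bochner_Integration.integrable_bound[OF iK]) (auto simp: Q_def K_def abs_mult indicator_def)
  have P_inner: "(\<integral>r. P s r \<partial>lebesgue) = F s * Gl s" for s
    by (simp add: P_def Gl_def)
  have Q_inner: "(\<integral>s. Q s r \<partial>lebesgue) = G r * Fl r" for r
    by (simp add: Q_def Fl_def)
  show "integrable lebesgue (\<lambda>s. F s * Gl s)"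
    using integrable_fst[OF iP] by (simp add: P_inner)
  show "integrable lebesgue (\<lambda>r. G r * Fl r)"
    using integrable_snd[OF iQ] by (simp add: Q_inner)
  have "(\<integral>s. F s \<partial>lebesgue) * (\<integral>r. G r \<partial>lebesgue) = integral\<^sup>L (lebesgue \<Otimes>\<^sub>M lebesgue) (\<lambda>(s, r). K s r)"
    using integral_fst[OF iK] by (simp add: K_def)
  also have "\<dots> = integral\<^sup>L (lebesgue \<Otimes>\<^sub>M lebesgue) (\<lambda>(s, r). P s r)
                 + integral\<^sup>L (lebesgue \<Otimes>\<^sub>M lebesgue) (\<lambda>(s, r). Q s r)"
    unfolding K_split by (subst Bochner_Integration.integral_add[OF iP iQ, symmetric])
      (simp add: case_prod_beta')
  also have "\<dots> = (\<integral>s. F s * Gl s \<partial>lebesgue) + (\<integral>r. G r * Fl r \<partial>lebesgue)"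
    using integral_fst[OF iP] integral_snd[OF iQ] by (simp add: P_inner Q_inner)
  finally show "(\<integral>s. F s \<partial>lebesgue) * (\<integral>r. G r \<partial>lebesgue)
           = (\<integral>s. F s * Gl s \<partial>lebesgue) + (\<integral>r. G r * Fl r \<partial>lebesgue)" .
qed

lemma has_integral_product_of_primitives:
  fixes f g :: "real \<Rightarrow> real"
  assumes f: "f absolutely_integrable_on {0..t}" and g: "g absolutely_integrable_on {0..t}"
  shows "((\<lambda>s. f s * integral {0..s} g + integral {0..s} f * g s) has_integral
           integral {0..t} f * integral {0..t} g) {0..t}"
proof -
  define F where "F s = indicator {0..t} s * f s" for s
  define G where "G s = indicator {0..t} s * g s" for s
  have iF: "integrable lebesgue F" and iG: "integrable lebesgue G"
    using f g by (simp_all add: F_def[abs_def] G_def[abs_def] set_integrable_def)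
  have G_le: "(\<integral>r. indicator {..s} r * G r \<partial>lebesgue) = integral {0..s} g" if "s \<in> {0..t}" for s
  proof -
    have "(\<integral>r. indicator {..s} r * G r \<partial>lebesgue) = (\<integral>r. indicator {0..s} r * g r \<partial>lebesgue)"
      using that by (intro Bochner_Integration.integral_cong) (auto simp: G_def indicator_def)
    also have "\<dots> = integral {0..s} g"
      using that by (intro lebesgue_integral_indicator_eq_integral set_integrable_subset[OF g]) auto
    finally show ?thesis .
  qed
  have F_less: "(\<integral>s. indicator {..<r} s * F s \<partial>lebesgue) = integral {0..r} f" if "r \<in> {0..t}" for r
  proof -
    have "(\<integral>s. indicator {..<r} s * F s \<partial>lebesgue) = (\<integral>s. indicator {0..<r} s * f s \<partial>lebesgue)"
      using that by (intro Bochner_Integration.integral_cong) (auto simp: F_def indicator_def)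
    also have "\<dots> = integral {0..<r} f"
      using that by (intro lebesgue_integral_indicator_eq_integral set_integrable_subset[OF f]) auto
    also have "\<dots> = integral {0..r} f"
      by (rule integral_spike_set) (auto intro: negligible_subset[of "{r}"])
    finally show ?thesis .
  qed
  have on_interval: "((\<lambda>s. h s * H s) has_integral (\<integral>s. indicator {0..t} s * h s * H' s \<partial>lebesgue)) {0..t}"
    if "integrable lebesgue (\<lambda>s. indicator {0..t} s * h s * H' s)" and "\<And>s. s \<in> {0..t} \<Longrightarrow> H' s = H s"
    for h H H' :: "real \<Rightarrow> real"
  proof -
    have eq: "indicator {0..t} s * h s * H' s = indicator {0..t} s *\<^sub>R (h s * H s)" for s
      using that(2) by (auto simp: indicator_def)
    have "set_integrable lebesgue {0..t} (\<lambda>s. h s * H s)"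
      using that(1) unfolding set_integrable_def eq .
    from has_integral_set_lebesgue[OF this] show ?thesis
      unfolding set_lebesgue_integral_def eq .
  qed
  note split = integral_product_split_diagonal[OF iF iG]
  have lower_triangle: "((\<lambda>s. f s * integral {0..s} g) has_integral
          (\<integral>s. F s * (\<integral>r. indicator {..s} r * G r \<partial>lebesgue) \<partial>lebesgue)) {0..t}"
    using on_interval[OF split(1)[unfolded F_def] G_le] unfolding F_def .
  have upper_triangle: "((\<lambda>s. g s * integral {0..s} f) has_integral
          (\<integral>r. G r * (\<integral>s. indicator {..<r} s * F s \<partial>lebesgue) \<partial>lebesgue)) {0..t}"
    using on_interval[OF split(2)[unfolded G_def] F_less] unfolding G_def .
  have "(\<integral>s. F s \<partial>lebesgue) = integral {0..t} f" "(\<integral>s. G s \<partial>lebesgue) = integral {0..t} g"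
    unfolding F_def G_def using f g by (simp_all only: lebesgue_integral_indicator_eq_integral)
  with split(3) have "((\<lambda>s. f s * integral {0..s} g + g s * integral {0..s} f) has_integral
           integral {0..t} f * integral {0..t} g) {0..t}"
    using has_integral_add[OF lower_triangle upper_triangle] by simp
  then show ?thesis
    by (simp only: mult.commute[of "g _"])
qed

lemma bilinear_expand:
  fixes h :: "'a::euclidean_space \<Rightarrow> 'b::euclidean_space \<Rightarrow> 'c::real_vector"
  assumes h: "bilinear h"
  shows "h x y = (\<Sum>i\<in>Basis. \<Sum>j\<in>Basis. ((x \<bullet> i) * (y \<bullet> j)) *\<^sub>R h i j)"
proof -
  have "h x y = h (\<Sum>i\<in>Basis. (x \<bullet> i) *\<^sub>R i) (\<Sum>j\<in>Basis. (y \<bullet> j) *\<^sub>R j)"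
    by (simp add: euclidean_representation)
  also have "\<dots> = (\<Sum>(i,j)\<in>Basis \<times> Basis. ((x \<bullet> i) * (y \<bullet> j)) *\<^sub>R h i j)"
    by (simp add: bilinear_sum[OF h] bilinear_lmul[OF h] bilinear_rmul[OF h] mult.commute)
  finally show ?thesis
    by (simp add: sum.cartesian_product)
qed

lemma has_integral_bilinear_of_primitives:
  fixes h :: "'a::euclidean_space \<Rightarrow> 'b::euclidean_space \<Rightarrow> 'c::euclidean_space"
    and f :: "real \<Rightarrow> 'a" and g :: "real \<Rightarrow> 'b"
  assumes h: "bilinear h" and f: "f absolutely_integrable_on {0..t}" and g: "g absolutely_integrable_on {0..t}"
  shows "((\<lambda>s. h (f s) (integral {0..s} g) + h (integral {0..s} f) (g s)) has_integral
           h (integral {0..t} f) (integral {0..t} g)) {0..t}"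
proof -
  have fi: "f integrable_on {0..s}" if "{0..s} \<subseteq> {0..t}" for s
    using absolutely_integrable_on_subinterval[OF f that] by (rule set_lebesgue_integral_eq_integral(1))
  have gi: "g integrable_on {0..s}" if "{0..s} \<subseteq> {0..t}" for s
    using absolutely_integrable_on_subinterval[OF g that] by (rule set_lebesgue_integral_eq_integral(1))
  have sum: "((\<lambda>s. \<Sum>i\<in>Basis. \<Sum>j\<in>Basis. ((f s \<bullet> i) * integral {0..s} (\<lambda>x. g x \<bullet> j)
                             + integral {0..s} (\<lambda>x. f x \<bullet> i) * (g s \<bullet> j)) *\<^sub>R h i j) has_integral
         (\<Sum>i\<in>Basis. \<Sum>j\<in>Basis. (integral {0..t} (\<lambda>x. f x \<bullet> i) * integral {0..t} (\<lambda>x. g x \<bullet> j)) *\<^sub>R h i j)) {0..t}"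
    by (intro has_integral_sum finite_Basis has_integral_scaleR_left has_integral_product_of_primitives
        absolutely_integrable_component f g)
  have total: "h (integral {0..t} f) (integral {0..t} g) =
      (\<Sum>i\<in>Basis. \<Sum>j\<in>Basis. (integral {0..t} (\<lambda>x. f x \<bullet> i) * integral {0..t} (\<lambda>x. g x \<bullet> j)) *\<^sub>R h i j)"
    using fi gi by (simp add: bilinear_expand[OF h, of "integral {0..t} f"])
  have pointwise: "h (f s) (integral {0..s} g) + h (integral {0..s} f) (g s) =
      (\<Sum>i\<in>Basis. \<Sum>j\<in>Basis. ((f s \<bullet> i) * integral {0..s} (\<lambda>x. g x \<bullet> j)
                             + integral {0..s} (\<lambda>x. f x \<bullet> i) * (g s \<bullet> j)) *\<^sub>R h i j)"
    if "s \<in> {0..t}" for s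
    using fi gi that by (simp add: bilinear_expand[OF h, of "f s"] bilinear_expand[OF h, of "integral {0..s} f"]
        sum.distrib[symmetric] scaleR_add_left)
  show ?thesis
    unfolding total by (rule has_integral_eq[OF pointwise[symmetric] sum])
qed

section \<open>Absolutely continuous functions on the unit interval\<close>

definition has_ac_derivative :: "(real \<Rightarrow> 'a::euclidean_space) \<Rightarrow> (real \<Rightarrow> 'a) \<Rightarrow> bool" where
  "has_ac_derivative F f \<longleftrightarrow>
     f absolutely_integrable_on {0..1} \<and> (\<forall>t\<in>{0..1}. (f has_integral (F t - F 0)) {0..t})"

lemma has_ac_derivative_absolutely_integrable:
  "has_ac_derivative F f \<Longrightarrow> t \<in> {0..1} \<Longrightarrow> f absolutely_integrable_on {0..t}"
  unfolding has_ac_derivative_def by (auto intro: absolutely_integrable_on_subinterval)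

lemma has_ac_derivative_has_integral:
  "has_ac_derivative F f \<Longrightarrow> t \<in> {0..1} \<Longrightarrow> (f has_integral (F t - F 0)) {0..t}"
  unfolding has_ac_derivative_def by auto

lemma has_ac_derivative_eq_integral:
  "has_ac_derivative F f \<Longrightarrow> t \<in> {0..1} \<Longrightarrow> F t = F 0 + integral {0..t} f"
  by (metis has_ac_derivative_has_integral integral_unique add.commute diff_add_cancel)

lemma has_integral_increments_imp_continuous_on:
  fixes F f :: "real \<Rightarrow> 'a::euclidean_space"
  assumes "\<forall>t\<in>{0..1}. (f has_integral (F t - F 0)) {0..t}"
  shows "continuous_on {0..1} F"
proof -
  have "(f has_integral (F 1 - F 0)) {0..1}"
    using assms by simp
  then have "continuous_on {0..1} (\<lambda>t. F 0 + integral {0..t} f)"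
    by (intro continuous_intros indefinite_integral_continuous_1) blast
  then show ?thesis
    by (rule continuous_on_eq) (metis assms add.commute diff_add_cancel integral_unique)
qed

lemma has_ac_derivative_continuous_on: "has_ac_derivative F f \<Longrightarrow> continuous_on {0..1} F"
  unfolding has_ac_derivative_def by (blast intro: has_integral_increments_imp_continuous_on)

lemma has_ac_derivative_primitive:
  assumes "f absolutely_integrable_on {0..1}"
  shows "has_ac_derivative (\<lambda>t. integral {0..t} f) f"
  unfolding has_ac_derivative_def
proof (intro conjI ballI assms)
  fix t :: real
  assume "t \<in> {0..1}"
  then have "f integrable_on {0..t}"
    by (intro set_lebesgue_integral_eq_integral(1) absolutely_integrable_on_subinterval[OF assms]) auto
  then show "(f has_integral (integral {0..t} f - integral {0..0} f)) {0..t}"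
    by (simp add: integrable_integral)
qed

lemma has_ac_derivative_cong:
  assumes "has_ac_derivative F f"
    and "\<And>s. s \<in> {0..1} \<Longrightarrow> F s = G s" and "\<And>s. s \<in> {0..1} \<Longrightarrow> f s = g s"
  shows "has_ac_derivative G g"
  unfolding has_ac_derivative_def
proof (intro conjI ballI)
  show "g absolutely_integrable_on {0..1}"
    by (rule absolutely_integrable_spike[OF has_ac_derivative_absolutely_integrable[OF assms(1), of 1],
          where S="{}"]) (use assms(3) in auto)
  fix t :: real
  assume t: "t \<in> {0..1}"
  have "(g has_integral (F t - F 0)) {0..t}"
    by (rule has_integral_eq[OF _ has_ac_derivative_has_integral[OF assms(1) t]]) (use assms(3) t in auto)
  then show "(g has_integral (G t - G 0)) {0..t}"
    using assms(2) t by auto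
qed

lemma has_ac_derivative_const: "has_ac_derivative (\<lambda>s. c) (\<lambda>s. 0)"
  unfolding has_ac_derivative_def by auto

lemma has_ac_derivative_add:
  assumes "has_ac_derivative F f" "has_ac_derivative G g"
  shows "has_ac_derivative (\<lambda>s. F s + G s) (\<lambda>s. f s + g s)"
  unfolding has_ac_derivative_def
proof (intro conjI ballI)
  show "(\<lambda>s. f s + g s) absolutely_integrable_on {0..1}"
    using assms[THEN has_ac_derivative_absolutely_integrable, of 1] by (intro set_integral_add(1)) auto
  fix t :: real
  assume "t \<in> {0..1}"
  from has_integral_add[OF assms[THEN has_ac_derivative_has_integral, OF this]]
  show "((\<lambda>s. f s + g s) has_integral (F t + G t - (F 0 + G 0))) {0..t}"
    by (simp add: algebra_simps)
qed

lemma has_ac_derivative_linear: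
  assumes L: "bounded_linear L" and "has_ac_derivative F f"
  shows "has_ac_derivative (\<lambda>s. L (F s)) (\<lambda>s. L (f s))"
  unfolding has_ac_derivative_def
proof (intro conjI ballI)
  show "(\<lambda>s. L (f s)) absolutely_integrable_on {0..1}"
    using absolutely_integrable_linear[OF has_ac_derivative_absolutely_integrable[OF assms(2), of 1] L]
    by (simp add: o_def)
  fix t :: real
  assume "t \<in> {0..1}"
  from has_integral_linear[OF has_ac_derivative_has_integral[OF assms(2) this] L]
  show "((\<lambda>s. L (f s)) has_integral (L (F t) - L (F 0))) {0..t}"
    by (simp add: o_def linear_diff[OF bounded_linear.linear[OF L]])
qed

lemma absolutely_integrable_bilinear_continuous:
  fixes h :: "'a::euclidean_space \<Rightarrow> 'b::euclidean_space \<Rightarrow> 'c::euclidean_space"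
    and F :: "real \<Rightarrow> 'a"
  assumes "bilinear h" and "continuous_on {a..b} F" and "g absolutely_integrable_on {a..b}"
  shows "(\<lambda>s. h (F s) (g s)) absolutely_integrable_on {a..b}"
proof (rule absolutely_integrable_bounded_measurable_product[OF assms(1) _ _ _ assms(3)])
  show "F \<in> borel_measurable (lebesgue_on {a..b})"
    by (rule continuous_imp_measurable_on_sets_lebesgue[OF assms(2)]) auto
  show "bounded (F ` {a..b})"
    by (rule compact_imp_bounded[OF compact_continuous_image[OF assms(2)]]) auto
qed auto

lemma has_ac_derivative_bilinear:
  fixes h :: "'a::euclidean_space \<Rightarrow> 'b::euclidean_space \<Rightarrow> 'c::euclidean_space"
  assumes h: "bilinear h" and F: "has_ac_derivative F f" and G: "has_ac_derivative G g"
  shows "has_ac_derivative (\<lambda>s. h (F s) (G s)) (\<lambda>s. h (f s) (G s) + h (F s) (g s))"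
  unfolding has_ac_derivative_def
proof (intro conjI ballI)
  have h': "bilinear (\<lambda>x y. h y x)"
    using h by (simp add: bilinear_def)
  have "(\<lambda>s. h (f s) (G s)) absolutely_integrable_on {0..1}"
    using absolutely_integrable_bilinear_continuous[OF h' has_ac_derivative_continuous_on[OF G]
        has_ac_derivative_absolutely_integrable[OF F, of 1]] by simp
  moreover have "(\<lambda>s. h (F s) (g s)) absolutely_integrable_on {0..1}"
    using absolutely_integrable_bilinear_continuous[OF h has_ac_derivative_continuous_on[OF F]
        has_ac_derivative_absolutely_integrable[OF G, of 1]] by simp
  ultimately show "(\<lambda>s. h (f s) (G s) + h (F s) (g s)) absolutely_integrable_on {0..1}"
    by (rule set_integral_add(1))
  fix t :: real
  assume t: "t \<in> {0..1}"
  have bb: "bounded_bilinear h"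
    using h bilinear_conv_bounded_bilinear by blast
  have f_int: "(f has_integral (F t - F 0)) {0..t}" and g_int: "(g has_integral (G t - G 0)) {0..t}"
    using F G t by (simp_all add: has_ac_derivative_has_integral)
  have "((\<lambda>s. h (f s) (G 0)) has_integral h (F t - F 0) (G 0)) {0..t}"
    using has_integral_linear[OF f_int bounded_bilinear.bounded_linear_left[OF bb]] by (simp add: o_def)
  moreover have "((\<lambda>s. h (F 0) (g s)) has_integral h (F 0) (G t - G 0)) {0..t}"
    using has_integral_linear[OF g_int bounded_bilinear.bounded_linear_right[OF bb]] by (simp add: o_def)
  moreover have "((\<lambda>s. h (f s) (integral {0..s} g) + h (integral {0..s} f) (g s))
      has_integral h (F t - F 0) (G t - G 0)) {0..t}"
    using has_integral_bilinear_of_primitives[OF h has_ac_derivative_absolutely_integrable[OF F t]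
        has_ac_derivative_absolutely_integrable[OF G t]]
    by (simp add: integral_unique[OF f_int] integral_unique[OF g_int])
  ultimately have sum: "((\<lambda>s. h (f s) (G 0) + h (F 0) (g s) + (h (f s) (integral {0..s} g) + h (integral {0..s} f) (g s)))
     has_integral (h (F t - F 0) (G 0) + h (F 0) (G t - G 0) + h (F t - F 0) (G t - G 0))) {0..t}"
    by (intro has_integral_add)
  have total: "h (F t - F 0) (G 0) + h (F 0) (G t - G 0) + h (F t - F 0) (G t - G 0) = h (F t) (G t) - h (F 0) (G 0)"
    by (simp add: bilinear_lsub[OF h] bilinear_rsub[OF h] algebra_simps)
  have pointwise: "h (f s) (G s) + h (F s) (g s)
      = h (f s) (G 0) + h (F 0) (g s) + (h (f s) (integral {0..s} g) + h (integral {0..s} f) (g s))"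
    if "s \<in> {0..t}" for s
  proof -
    have s: "s \<in> {0..1}"
      using that t by auto
    show ?thesis
      unfolding has_ac_derivative_eq_integral[OF F s] has_ac_derivative_eq_integral[OF G s]
      by (simp add: bilinear_ladd[OF h] bilinear_radd[OF h] ac_simps)
  qed
  show "((\<lambda>s. h (f s) (G s) + h (F s) (g s)) has_integral (h (F t) (G t) - h (F 0) (G 0))) {0..t}"
    unfolding total[symmetric] by (rule has_integral_eq[OF pointwise[symmetric] sum])
qed

lemma has_ac_derivative_power:
  fixes V a :: "real \<Rightarrow> 'a::{euclidean_space, real_normed_field}"
  assumes "has_ac_derivative V a"
  shows "has_ac_derivative (\<lambda>s. V s ^ Suc n) (\<lambda>s. of_nat (Suc n) * V s ^ n * a s)"
proof (induction n)
  case 0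
  show ?case
    by (rule has_ac_derivative_cong[OF assms]) auto
next
  case (Suc n)
  from has_ac_derivative_bilinear[OF bilinear_times Suc assms] show ?case
    by (rule has_ac_derivative_cong) (auto simp: algebra_simps)
qed

lemma has_ac_derivative_exp_series_term:
  fixes V a :: "real \<Rightarrow> 'a::{euclidean_space, real_normed_field}"
  assumes "has_ac_derivative V a"
  shows "has_ac_derivative (\<lambda>s. V s ^ Suc n /\<^sub>R fact (Suc n)) (\<lambda>s. (V s ^ n /\<^sub>R fact n) * a s)"
proof -
  have coeff: "inverse (fact (Suc n)) * real (Suc n) = inverse (fact n)"
    by (simp add: fact_Suc del: of_nat_Suc)
  have rescale: "inverse (fact (Suc n)) *\<^sub>R (of_nat (Suc n) * V s ^ n * a s) = (V s ^ n /\<^sub>R fact n) * a s" for s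
  proof -
    have "inverse (fact (Suc n)) *\<^sub>R (of_nat (Suc n) * V s ^ n * a s)
        = (inverse (fact (Suc n)) * real (Suc n)) *\<^sub>R (V s ^ n * a s)"
      by (simp add: scaleR_conv_of_real mult.assoc del: of_nat_Suc)
    then show ?thesis
      by (simp add: coeff)
  qed
  show ?thesis
    by (rule has_ac_derivative_cong[OF has_ac_derivative_linear[OF bounded_linear_scaleR_right[of "inverse (fact (Suc n))"]
          has_ac_derivative_power[OF assms, of n]]]) (rule refl, rule rescale)
qed

lemma has_ac_derivative_exp:
  fixes V a :: "real \<Rightarrow> 'a::{euclidean_space, real_normed_field}"
  assumes V: "has_ac_derivative V a"
  shows "has_ac_derivative (\<lambda>s. exp (V s)) (\<lambda>s. exp (V s) * a s)"
  \<comment> \<open>integrate the exponential series termwise, by dominated convergence\<close>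
  unfolding has_ac_derivative_def
proof (intro conjI ballI)
  have cV: "continuous_on {0..1} V"
    by (rule has_ac_derivative_continuous_on[OF V])
  then show "(\<lambda>s. exp (V s) * a s) absolutely_integrable_on {0..1}"
    by (intro absolutely_integrable_bilinear_continuous[OF bilinear_times] continuous_intros
        has_ac_derivative_absolutely_integrable[OF V]) auto
  obtain B where B: "\<And>s. s \<in> {0..1} \<Longrightarrow> norm (V s) \<le> B"
    using compact_imp_bounded[OF compact_continuous_image[OF cV]] unfolding bounded_iff by fastforce
  fix t :: real
  assume t: "t \<in> {0..1}"
  define p where "p k s = (\<Sum>n<k. V s ^ n /\<^sub>R fact n) * a s" for k s
  have p_integral: "(p k has_integral (\<Sum>n<k. V t ^ Suc n /\<^sub>R fact (Suc n) - V 0 ^ Suc n /\<^sub>R fact (Suc n))) {0..t}"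
    for k
    unfolding p_def sum_distrib_right
    by (intro has_integral_sum has_ac_derivative_has_integral[OF has_ac_derivative_exp_series_term[OF V] t]) auto
  have p_bound: "norm (p k s) \<le> exp B * norm (a s)" if "s \<in> {0..t}" for k s
  proof -
    have "norm (\<Sum>n<k. V s ^ n /\<^sub>R fact n) \<le> (\<Sum>n<k. norm (V s) ^ n /\<^sub>R fact n)"
      by (rule order_trans[OF norm_sum]) (simp add: norm_power)
    also have "\<dots> \<le> exp (norm (V s))"
      using sum_le_suminf[OF sums_summable[OF exp_converges[of "norm (V s)"]], of "{..<k}"]
      by (simp add: sums_unique[OF exp_converges])
    also have "\<dots> \<le> exp B"
      using B that t by auto
    finally show ?thesis
      unfolding p_def norm_mult by (simp add: mult_right_mono)
  qed
  have p_limit: "(\<lambda>k. p k s) \<longlonglongrightarrow> exp (V s) * a s" for s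
    unfolding p_def using exp_converges[of "V s"] by (intro tendsto_mult_right) (simp add: sums_def)
  have "(\<lambda>s. exp B * norm (a s)) integrable_on {0..t}"
    using has_ac_derivative_absolutely_integrable[OF V t] integrable_cmul[of "\<lambda>s. norm (a s)" "{0..t}" "exp B"]
    by (simp add: absolutely_integrable_on_def)
  then have "(\<lambda>s. exp (V s) * a s) integrable_on {0..t}"
    and "(\<lambda>k. integral {0..t} (p k)) \<longlonglongrightarrow> integral {0..t} (\<lambda>s. exp (V s) * a s)"
    using dominated_convergence[of p "{0..t}" "\<lambda>s. exp B * norm (a s)" "\<lambda>s. exp (V s) * a s"]
      p_integral p_bound p_limit by (auto simp: integrable_on_def)
  moreover have "(\<lambda>k. integral {0..t} (p k)) \<longlonglongrightarrow> (exp (V t) - 1) - (exp (V 0) - 1)"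
  proof -
    have "(\<lambda>n. x ^ Suc n /\<^sub>R fact (Suc n)) sums (exp x - 1)" for x :: 'a
      using sums_Suc_iff[where f="\<lambda>n. x ^ n /\<^sub>R fact n"] exp_converges[of x] by simp
    then show ?thesis
      unfolding integral_unique[OF p_integral] sum_subtractf sums_def by (intro tendsto_diff)
  qed
  ultimately show "((\<lambda>s. exp (V s) * a s) has_integral (exp (V t) - exp (V 0))) {0..t}"
    using LIMSEQ_unique integrable_integral by fastforce
qed

section \<open>Block-diagonal matrices\<close>

definition blockdiag :: "complex \<Rightarrow> complex \<Rightarrow> complex \<Rightarrow> complex \<Rightarrow> complex \<Rightarrow> cmat3" where
  "blockdiag p q r s z = (\<chi> i j. if i = 1 \<and> j = 1 then p else if i = 1 \<and> j = 2 then q else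
     if i = 2 \<and> j = 1 then r else if i = 2 \<and> j = 2 then s else if i = 3 \<and> j = 3 then z else 0)"

lemma blockdiag_nth [simp]:
  "blockdiag p q r s z $ 1 $ 1 = p" "blockdiag p q r s z $ 1 $ 2 = q" "blockdiag p q r s z $ 1 $ 3 = 0"
  "blockdiag p q r s z $ 2 $ 1 = r" "blockdiag p q r s z $ 2 $ 2 = s" "blockdiag p q r s z $ 2 $ 3 = 0"
  "blockdiag p q r s z $ 3 $ 1 = 0" "blockdiag p q r s z $ 3 $ 2 = 0" "blockdiag p q r s z $ 3 $ 3 = z"
  by (simp_all add: blockdiag_def)

lemma cmat3_eq_iff: "(M :: cmat3) = N \<longleftrightarrow> (\<forall>i j. M $ i $ j = N $ i $ j)"
  by (simp add: vec_eq_iff)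

lemma blockdiag_eq_iff:
  "blockdiag p q r s z = blockdiag p' q' r' s' z' \<longleftrightarrow> p = p' \<and> q = q' \<and> r = r' \<and> s = s' \<and> z = z'"
  by (auto simp: cmat3_eq_iff forall_3)

lemma munit_blockdiag:
  "munit 1 1 = blockdiag 1 0 0 0 0" "munit 1 2 = blockdiag 0 1 0 0 0" "munit 2 1 = blockdiag 0 0 1 0 0"
  "munit 2 2 = blockdiag 0 0 0 1 0" "munit 3 3 = blockdiag 0 0 0 0 1"
  by (auto simp: cmat3_eq_iff forall_3 munit_def)

lemma csmult_blockdiag: "csmult c (blockdiag p q r s z) = blockdiag (c * p) (c * q) (c * r) (c * s) (c * z)"
  by (auto simp: cmat3_eq_iff forall_3 csmult_def)

lemma blockdiag_add:
  "blockdiag p q r s z + blockdiag p' q' r' s' z' = blockdiag (p + p') (q + q') (r + r') (s + s') (z + z')"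
  by (auto simp: cmat3_eq_iff forall_3)

lemma blockdiag_diff:
  "blockdiag p q r s z - blockdiag p' q' r' s' z' = blockdiag (p - p') (q - q') (r - r') (s - s') (z - z')"
  by (auto simp: cmat3_eq_iff forall_3)

lemma blockdiag_mult: "blockdiag p q r s z ** blockdiag p' q' r' s' z' =
   blockdiag (p * p' + q * r') (p * q' + q * s') (r * p' + s * r') (r * q' + s * s') (z * z')"
  by (auto simp: cmat3_eq_iff forall_3 matrix_matrix_mult_def sum_3)

lemma matrix_mult_blockdiag_33: "(M ** blockdiag p q r s z) $ 3 $ 3 = M $ 3 $ 3 * z"
  by (simp add: matrix_matrix_mult_def sum_3)

lemma Idm_blockdiag: "Idm = blockdiag 1 0 0 1 1"
  by (auto simp: cmat3_eq_iff forall_3 Idm_def mat_def)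

lemma E_blockdiag:
  "E1 = blockdiag 0 (1/2) (-1/2) 0 0" "E2 = blockdiag 0 (\<i>/2) (\<i>/2) 0 0"
  "E3 = blockdiag (\<i>/2) 0 0 (-\<i>/2) 0" "E4 = blockdiag 0 0 0 0 1"
  by (simp_all add: E1_def E2_def E3_def E4_def munit_blockdiag csmult_blockdiag blockdiag_add blockdiag_diff)

lemma grp_blockdiag: "grp A B v = blockdiag A B (- cnj B) (cnj A) (exp v)"
  by (simp add: grp_def munit_blockdiag csmult_blockdiag blockdiag_add blockdiag_diff)

lemma csmult_of_real: "csmult (of_real r) M = r *\<^sub>R M"
  by (simp add: cmat3_eq_iff csmult_def of_real_def)

lemma bounded_linear_csmult: "bounded_linear (\<lambda>z. csmult z M)"
proof -
  have "linear (\<lambda>z. csmult z M)"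
    by (auto intro!: linearI simp: vec_eq_iff csmult_def algebra_simps)
  then show ?thesis
    by (simp add: linear_conv_bounded_linear)
qed

lemma matrix_add_rdistrib: "(B + C) ** A = B ** A + C ** (A :: 'a::semiring_1^'n^'m)"
  by (simp add: vec_eq_iff matrix_matrix_mult_def sum.distrib distrib_right)

lemma bilinear_matrix_mult: "bilinear (\<lambda>(A :: 'a::real_algebra_1^'n^'m) (B :: 'a^'p^'n). A ** B)"
  unfolding bilinear_def
  by (auto intro!: linearI simp: matrix_add_ldistrib matrix_add_rdistrib scalar_matrix_assoc matrix_scalar_ac)

section \<open>Rotating horizontal curves\<close>

definition tilted_E4 :: "real \<Rightarrow> cmat3" where
  "tilted_E4 a = E4 - csmult (of_real a) E3"

definition exp_E3 :: "real \<Rightarrow> cmat3" where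
  "exp_E3 \<theta> = blockdiag (exp (\<i> * of_real (\<theta> / 2))) 0 0 (exp (- \<i> * of_real (\<theta> / 2))) 1"

definition frame_comb :: "cmat3 \<Rightarrow> cmat3 \<Rightarrow> cmat3 \<Rightarrow> real \<Rightarrow> real \<Rightarrow> real \<Rightarrow> cmat3" where
  "frame_comb X1 X2 X3 x1 x2 x3 = csmult (of_real x1) X1 + csmult (of_real x2) X2 + csmult (of_real x3) X3"

lemma tilted_E4_blockdiag: "tilted_E4 a = blockdiag (- \<i> * of_real a / 2) 0 0 (\<i> * of_real a / 2) 1"
  by (simp add: tilted_E4_def E_blockdiag csmult_blockdiag blockdiag_diff mult.commute)

lemma tilted_E4_0: "tilted_E4 0 = E4"
  by (simp add: tilted_E4_def cmat3_eq_iff csmult_def)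

lemma tilted_E4_1: "tilted_E4 1 = E4 - E3"
  by (simp add: tilted_E4_def cmat3_eq_iff csmult_def)

lemma exp_E3_0: "exp_E3 0 = Idm"
  by (simp add: exp_E3_def Idm_blockdiag)

lemma grp_mult_exp_E3:
  "grp A B v ** exp_E3 \<theta> = grp (A * exp (\<i> * of_real (\<theta> / 2))) (B * exp (- \<i> * of_real (\<theta> / 2))) v"
  by (simp add: grp_blockdiag exp_E3_def blockdiag_mult exp_cnj)

text \<open>Conjugation by \<open>exp_E3 \<theta>\<close> rotates \<open>E1, E2\<close> by the angle \<open>\<theta>\<close> and fixes \<open>E3, E4\<close>.\<close>

lemma frame_comb_mult_exp_E3:
  "frame_comb E1 (tilted_E4 a) E2 x1 x2 x3 ** exp_E3 \<theta> + exp_E3 \<theta> ** csmult (of_real (c * x2)) E3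
   = exp_E3 \<theta> ** frame_comb E1 (tilted_E4 (a - c)) E2
                   (x1 * cos \<theta> + x3 * sin \<theta>) x2 (x3 * cos \<theta> - x1 * sin \<theta>)"
proof -
  define p where "p = exp (\<i> * of_real (\<theta> / 2))"
  define q where "q = exp (- \<i> * of_real (\<theta> / 2))"
  have "exp (- (\<i> * of_real \<theta>)) = of_real (cos \<theta>) - \<i> * of_real (sin \<theta>)"
    and "exp (\<i> * of_real \<theta>) = of_real (cos \<theta>) + \<i> * of_real (sin \<theta>)"
    by (simp_all add: complex_eq_iff Re_exp Im_exp)
  moreover have "q = p * exp (- (\<i> * of_real \<theta>))" and "p = q * exp (\<i> * of_real \<theta>)"
    by (simp_all add: p_def q_def exp_add[symmetric] algebra_simps)
  ultimately have q: "q = p * (of_real (cos \<theta>) - \<i> * of_real (sin \<theta>))"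
    and p: "p = q * (of_real (cos \<theta>) + \<i> * of_real (sin \<theta>))"
    by metis+
  have i_squared: "\<i> * \<i> = (-1 :: complex)"
    by simp
  show ?thesis
    unfolding exp_E3_def p_def[symmetric] q_def[symmetric] frame_comb_def tilted_E4_blockdiag E_blockdiag
      csmult_blockdiag blockdiag_add blockdiag_mult blockdiag_eq_iff
    by (intro conjI; simp add: algebra_simps; use p q i_squared in algebra)
qed

lemma absolutely_integrable_frame_comb:
  fixes u1 u2 u3 :: "real \<Rightarrow> real"
  assumes "u1 absolutely_integrable_on S" "u2 absolutely_integrable_on S" "u3 absolutely_integrable_on S"
  shows "(\<lambda>s. frame_comb X1 X2 X3 (u1 s) (u2 s) (u3 s)) absolutely_integrable_on S"
  unfolding frame_comb_def csmult_of_real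
  using assms by (intro set_integral_add(1) absolutely_integrable_scaleR_right)

lemma horizontal_iff_has_ac_derivative:
  "horizontal X1 X2 X3 \<gamma> u1 u2 u3 \<longleftrightarrow>
     u1 absolutely_integrable_on {0..1} \<and> u2 absolutely_integrable_on {0..1} \<and>
     u3 absolutely_integrable_on {0..1} \<and>
     has_ac_derivative \<gamma> (\<lambda>s. \<gamma> s ** frame_comb X1 X2 X3 (u1 s) (u2 s) (u3 s))"
proof
  assume H: "horizontal X1 X2 X3 \<gamma> u1 u2 u3"
  then have u: "u1 absolutely_integrable_on {0..1}" "u2 absolutely_integrable_on {0..1}"
      "u3 absolutely_integrable_on {0..1}"
    and increments: "\<forall>t\<in>{0..1}. ((\<lambda>s. \<gamma> s ** frame_comb X1 X2 X3 (u1 s) (u2 s) (u3 s))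
                                  has_integral (\<gamma> t - \<gamma> 0)) {0..t}"
    unfolding horizontal_def frame_comb_def by blast+
  have "(\<lambda>s. \<gamma> s ** frame_comb X1 X2 X3 (u1 s) (u2 s) (u3 s)) absolutely_integrable_on {0..1}"
    by (rule absolutely_integrable_bilinear_continuous[OF bilinear_matrix_mult
          has_integral_increments_imp_continuous_on[OF increments] absolutely_integrable_frame_comb[OF u]])
  with u increments show "u1 absolutely_integrable_on {0..1} \<and> u2 absolutely_integrable_on {0..1} \<and>
     u3 absolutely_integrable_on {0..1} \<and>
     has_ac_derivative \<gamma> (\<lambda>s. \<gamma> s ** frame_comb X1 X2 X3 (u1 s) (u2 s) (u3 s))"
    unfolding has_ac_derivative_def by blast
qed (auto simp: horizontal_def has_ac_derivative_def frame_comb_def)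

lemma horizontal_tilted_E4_33:
  assumes H: "horizontal E1 (tilted_E4 a) E2 \<gamma> u1 u2 u3" and start: "\<gamma> 0 = Idm" and t: "t \<in> {0..1}"
  shows "\<gamma> t $ 3 $ 3 = of_real (exp (integral {0..t} u2))"
proof -
  define w where "w s = integral {0..s} u2" for s
  have u2: "u2 absolutely_integrable_on {0..1}"
    and \<gamma>: "has_ac_derivative \<gamma> (\<lambda>s. \<gamma> s ** frame_comb E1 (tilted_E4 a) E2 (u1 s) (u2 s) (u3 s))"
    using H unfolding horizontal_iff_has_ac_derivative by auto
  have "bounded_linear (\<lambda>M :: cmat3. M $ 3 $ 3)"
    by (simp add: linear_conv_bounded_linear[symmetric] linearI)
  from has_ac_derivative_linear[OF this \<gamma>]
  have entry: "has_ac_derivative (\<lambda>s. \<gamma> s $ 3 $ 3) (\<lambda>s. \<gamma> s $ 3 $ 3 * of_real (u2 s))"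
    by (simp add: frame_comb_def tilted_E4_blockdiag E_blockdiag csmult_blockdiag blockdiag_add
        matrix_mult_blockdiag_33)
  have "has_ac_derivative (\<lambda>s. - of_real (w s) :: complex) (\<lambda>s. - of_real (u2 s))"
    unfolding w_def
    by (rule has_ac_derivative_linear[OF bounded_linear_minus[OF bounded_linear_of_real]
          has_ac_derivative_primitive[OF u2]])
  from has_ac_derivative_bilinear[OF bilinear_times entry has_ac_derivative_exp[OF this]]
  have "has_ac_derivative (\<lambda>s. \<gamma> s $ 3 $ 3 * exp (- of_real (w s))) (\<lambda>s. 0)"
    by (rule has_ac_derivative_cong) (simp_all add: algebra_simps)
  from has_ac_derivative_eq_integral[OF this t] have "\<gamma> t $ 3 $ 3 * exp (- of_real (w t)) = 1"
    by (simp add: start w_def Idm_blockdiag)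
  then show ?thesis
    by (simp add: w_def exp_minus field_simps exp_of_real)
qed

lemma has_ac_derivative_exp_E3:
  assumes "has_ac_derivative \<theta> \<theta>'"
  shows "has_ac_derivative (\<lambda>s. exp_E3 (\<theta> s)) (\<lambda>s. exp_E3 (\<theta> s) ** csmult (of_real (\<theta>' s)) E3)"
proof -
  define V where "V s = \<i> * of_real (\<theta> s / 2)" for s
  define a where "a s = \<i> * of_real (\<theta>' s / 2)" for s
  have "has_ac_derivative V a"
    by (rule has_ac_derivative_cong[OF has_ac_derivative_linear[OF bounded_linear_scaleR_left[of "\<i> / 2"] assms]])
      (simp_all add: V_def a_def scaleR_conv_of_real)
  then have "has_ac_derivative (\<lambda>s. csmult (exp (V s)) (munit 1 1) + csmult (exp (- V s)) (munit 2 2) + munit 3 3)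
      (\<lambda>s. csmult (exp (V s) * a s) (munit 1 1) + csmult (exp (- V s) * - a s) (munit 2 2) + 0)"
    by (intro has_ac_derivative_add has_ac_derivative_linear[OF bounded_linear_csmult] has_ac_derivative_exp
        has_ac_derivative_const has_ac_derivative_linear[OF bounded_linear_minus[OF bounded_linear_ident]])
  then show ?thesis
    by (rule has_ac_derivative_cong)
      (simp_all add: exp_E3_def V_def a_def E_blockdiag munit_blockdiag csmult_blockdiag blockdiag_add
        blockdiag_mult algebra_simps)
qed

lemma horizontal_mult_exp_E3:
  fixes c :: real
  assumes H: "horizontal E1 (tilted_E4 a) E2 \<gamma> u1 u2 u3"
  defines "\<theta> \<equiv> \<lambda>s. c * integral {0..s} u2"
  shows "horizontal E1 (tilted_E4 (a - c)) E2 (\<lambda>s. \<gamma> s ** exp_E3 (\<theta> s))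
           (\<lambda>s. u1 s * cos (\<theta> s) + u3 s * sin (\<theta> s)) u2 (\<lambda>s. u3 s * cos (\<theta> s) - u1 s * sin (\<theta> s))"
proof -
  have u1: "u1 absolutely_integrable_on {0..1}" and u2: "u2 absolutely_integrable_on {0..1}"
    and u3: "u3 absolutely_integrable_on {0..1}"
    and \<gamma>: "has_ac_derivative \<gamma> (\<lambda>s. \<gamma> s ** frame_comb E1 (tilted_E4 a) E2 (u1 s) (u2 s) (u3 s))"
    using H unfolding horizontal_iff_has_ac_derivative by auto
  have \<theta>: "has_ac_derivative \<theta> (\<lambda>s. c * u2 s)"
    unfolding \<theta>_def by (rule has_ac_derivative_linear[OF bounded_linear_mult_right has_ac_derivative_primitive[OF u2]])
  have "has_ac_derivative (\<lambda>s. \<gamma> s ** exp_E3 (\<theta> s))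
      (\<lambda>s. (\<gamma> s ** frame_comb E1 (tilted_E4 a) E2 (u1 s) (u2 s) (u3 s)) ** exp_E3 (\<theta> s)
           + \<gamma> s ** (exp_E3 (\<theta> s) ** csmult (of_real (c * u2 s)) E3))"
    by (rule has_ac_derivative_bilinear[OF bilinear_matrix_mult \<gamma> has_ac_derivative_exp_E3[OF \<theta>]])
  then have "has_ac_derivative (\<lambda>s. \<gamma> s ** exp_E3 (\<theta> s))
      (\<lambda>s. (\<gamma> s ** exp_E3 (\<theta> s)) ** frame_comb E1 (tilted_E4 (a - c)) E2
             (u1 s * cos (\<theta> s) + u3 s * sin (\<theta> s)) (u2 s) (u3 s * cos (\<theta> s) - u1 s * sin (\<theta> s)))"
    by (rule has_ac_derivative_cong) (simp_all only: matrix_mul_assoc[symmetric] matrix_add_ldistrib[symmetric]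
        frame_comb_mult_exp_E3)
  moreover have "continuous_on {0..1} (\<lambda>s. cos (\<theta> s))" "continuous_on {0..1} (\<lambda>s. sin (\<theta> s))"
    using has_ac_derivative_continuous_on[OF \<theta>] by (auto intro: continuous_intros)
  then have "(\<lambda>s. cos (\<theta> s) * u s) absolutely_integrable_on {0..1}"
    "(\<lambda>s. sin (\<theta> s) * u s) absolutely_integrable_on {0..1}"
    if "u absolutely_integrable_on {0..1}" for u
    using that by (auto intro: absolutely_integrable_bilinear_continuous[OF bilinear_times])
  then have "(\<lambda>s. u1 s * cos (\<theta> s) + u3 s * sin (\<theta> s)) absolutely_integrable_on {0..1}"
    "(\<lambda>s. u3 s * cos (\<theta> s) - u1 s * sin (\<theta> s)) absolutely_integrable_on {0..1}"
    using u1 u3 by (auto simp: mult.commute)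
  ultimately show ?thesis
    using u2 unfolding horizontal_iff_has_ac_derivative by blast
qed

lemma sr_length_rotate:
  "sr_length (\<lambda>s. u1 s * cos (\<theta> s) + u3 s * sin (\<theta> s)) u2 (\<lambda>s. u3 s * cos (\<theta> s) - u1 s * sin (\<theta> s))
   = sr_length u1 u2 u3"
proof -
  have "(x * cos t + z * sin t)\<^sup>2 + (z * cos t - x * sin t)\<^sup>2 = x\<^sup>2 + z\<^sup>2" for x z t :: real
    using sin_cos_squared_add[of t] by algebra
  then show ?thesis
    unfolding sr_length_def by (simp add: add.commute add.left_commute)
qed

definition sr_lengths :: "cmat3 \<Rightarrow> cmat3 \<Rightarrow> cmat3 \<Rightarrow> cmat3 \<Rightarrow> cmat3 \<Rightarrow> real set" where
  "sr_lengths X1 X2 X3 p q = {sr_length u1 u2 u3 | \<gamma> u1 u2 u3.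
       horizontal X1 X2 X3 \<gamma> u1 u2 u3 \<and> \<gamma> 0 = p \<and> \<gamma> 1 = q}"

lemma d1_eq_Inf_sr_lengths: "d1 p q = Inf (sr_lengths E1 (tilted_E4 1) E2 p q)"
  by (simp add: d1_def sr_dist_def sr_lengths_def tilted_E4_1)

lemma d2_eq_Inf_sr_lengths: "d2 p q = Inf (sr_lengths E1 (tilted_E4 0) E2 p q)"
  by (simp add: d2_def sr_dist_def sr_lengths_def tilted_E4_0)

lemma sr_lengths_tilted_E4_subset:
  "sr_lengths E1 (tilted_E4 a) E2 Idm (grp A B v)
   \<subseteq> sr_lengths E1 (tilted_E4 (a - c)) E2 Idm
        (grp (A * exp (\<i> * of_real (c * v / 2))) (B * exp (- \<i> * of_real (c * v / 2))) v)"
proof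
  fix l
  assume "l \<in> sr_lengths E1 (tilted_E4 a) E2 Idm (grp A B v)"
  then obtain \<gamma> u1 u2 u3 where H: "horizontal E1 (tilted_E4 a) E2 \<gamma> u1 u2 u3"
    and start: "\<gamma> 0 = Idm" and "end": "\<gamma> 1 = grp A B v" and l: "l = sr_length u1 u2 u3"
    unfolding sr_lengths_def by blast
  define \<theta> where "\<theta> s = c * integral {0..s} u2" for s
  define \<gamma>' where "\<gamma>' s = \<gamma> s ** exp_E3 (\<theta> s)" for s
  define u1' where "u1' s = u1 s * cos (\<theta> s) + u3 s * sin (\<theta> s)" for s
  define u3' where "u3' s = u3 s * cos (\<theta> s) - u1 s * sin (\<theta> s)" for s
  have "of_real (exp v) = (of_real (exp (integral {0..1} u2)) :: complex)"
    using horizontal_tilted_E4_33[OF H start, of 1] "end" by (simp add: grp_blockdiag)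
  then have "\<gamma>' 1 = grp (A * exp (\<i> * of_real (c * v / 2))) (B * exp (- \<i> * of_real (c * v / 2))) v"
    by (simp add: \<gamma>'_def \<theta>_def "end" grp_mult_exp_E3)
  moreover have "\<gamma>' 0 = Idm"
    by (simp add: \<gamma>'_def start \<theta>_def exp_E3_0 Idm_def)
  moreover have "horizontal E1 (tilted_E4 (a - c)) E2 \<gamma>' u1' u2 u3'"
    unfolding \<gamma>'_def u1'_def u3'_def \<theta>_def by (rule horizontal_mult_exp_E3[OF H])
  moreover have "l = sr_length u1' u2 u3'"
    unfolding l u1'_def u3'_def by (rule sr_length_rotate[symmetric])
  ultimately show "l \<in> sr_lengths E1 (tilted_E4 (a - c)) E2 Idm
      (grp (A * exp (\<i> * of_real (c * v / 2))) (B * exp (- \<i> * of_real (c * v / 2))) v)"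
    unfolding sr_lengths_def by blast
qed

theorem proposition8:
  fixes A B :: complex and v :: real
  assumes "(cmod A)\<^sup>2 + (cmod B)\<^sup>2 = 1"
  shows "d1 Idm (grp A B v) = d2 Idm (grp (A * exp (\<i> * of_real (v/2))) (B * exp (- \<i> * of_real (v/2))) v)"
proof -
  define A' where "A' = A * exp (\<i> * of_real (v/2))"
  define B' where "B' = B * exp (- \<i> * of_real (v/2))"
  have "A' * exp (\<i> * of_real (- 1 * v / 2)) = A" "B' * exp (- \<i> * of_real (- 1 * v / 2)) = B"
    by (simp_all add: A'_def B'_def mult.assoc exp_add[symmetric])
  then have "sr_lengths E1 (tilted_E4 0) E2 Idm (grp A' B' v) \<subseteq> sr_lengths E1 (tilted_E4 1) E2 Idm (grp A B v)"
    using sr_lengths_tilted_E4_subset[of 0 A' B' v "-1"] by simp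
  moreover have "sr_lengths E1 (tilted_E4 1) E2 Idm (grp A B v) \<subseteq> sr_lengths E1 (tilted_E4 0) E2 Idm (grp A' B' v)"
    using sr_lengths_tilted_E4_subset[of 1 A B v 1] by (simp add: A'_def B'_def)
  ultimately show ?thesis
    unfolding d1_eq_Inf_sr_lengths d2_eq_Inf_sr_lengths A'_def[symmetric] B'_def[symmetric] by simp
qed

end
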